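(* Let $\lambda=(\lambda_0,\lambda_1,\dots)\in\mathbf{W}(\mathcal{O}_K)$ and let $(\phi_0,\phi_1,\dots)\in\mathcal{O}_K^{\mathbb{N}}$ be its phantom vector. Then $\phi_j\to0$ in $\mathcal{O}_K$ if and only if $|\lambda_j|<1$ for all $j\ge0$.
   Context: $K$ is a field of characteristic $0$, complete for a non-archimedean absolute value $|\cdot|$, residue field of characteristic $p>0$; $\mathcal{O}_K=\{|x|\le1\}$. $\mathbf{W}(\mathcal{O}_K)$ is the ring of $p$-typical Witt vectors (of infinite length) with entries in $\mathcal{O}_K$; the phantom vector of $\lambda$ is given by $\phi_m=\lambda_0^{p^m}+p\lambda_1^{p^{m-1}}+\cdots+p^m\lambda_m$. *)

theory Defs
  imports "HOL-Analysis.Analysis"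
begin

definition nonarch_abs :: "('a::field \<Rightarrow> real) \<Rightarrow> bool" where
  "nonarch_abs av \<longleftrightarrow>
     (\<forall>x. av x \<ge> 0) \<and> (\<forall>x. av x = 0 \<longleftrightarrow> x = 0) \<and>
     (\<forall>x y. av (x * y) = av x * av y) \<and>
     (\<forall>x y. av (x + y) \<le> max (av x) (av y))"

definition abs_complete :: "('a::field \<Rightarrow> real) \<Rightarrow> bool" where
  "abs_complete av \<longleftrightarrow>
     (\<forall>s :: nat \<Rightarrow> 'a.
        (\<forall>e>0. \<exists>N. \<forall>m\<ge>N. \<forall>n\<ge>N. av (s m - s n) < e) \<longrightarrow>
        (\<exists>L. (\<lambda>n. av (s n - L)) \<longlonglongrightarrow> 0))"

text \<open>Residue field of characteristic p (p prime): |p| < 1.\<close>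
definition residue_char :: "('a::field \<Rightarrow> real) \<Rightarrow> nat \<Rightarrow> bool" where
  "residue_char av p \<longleftrightarrow> prime p \<and> av (of_nat p) < 1"

text \<open>Witt vectors with entries in O_K: sequences with all entries of absolute value at most 1.\<close>
definition witt_OK :: "('a::field \<Rightarrow> real) \<Rightarrow> (nat \<Rightarrow> 'a) \<Rightarrow> bool" where
  "witt_OK av lam \<longleftrightarrow> (\<forall>j. av (lam j) \<le> 1)"

definition phantom :: "nat \<Rightarrow> (nat \<Rightarrow> 'a::field) \<Rightarrow> nat \<Rightarrow> 'a" where
  "phantom p lam m = (\<Sum>i\<le>m. of_nat p ^ i * lam i ^ (p ^ (m - i)))"

end

theory Submission
  imports Defs
begin

text \<open>
  Write \<open>q = |p| < 1\<close>. The \<open>i\<close>-th summand of \<open>\<phi>\<^sub>m\<close> has absolute value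
  \<open>q^i |\<lambda>\<^sub>i|^(p^(m-i))\<close>, which is bounded both by \<open>q^i\<close> and by \<open>|\<lambda>\<^sub>i|^(p^(m-i))\<close>.
  If all \<open>|\<lambda>\<^sub>i| < 1\<close>, the summands with large \<open>i\<close> are small because of \<open>q^i\<close>
  and the finitely many others because of the growing exponent, so \<open>\<phi>\<^sub>m \<rightarrow> 0\<close> by
  the ultrametric inequality. Otherwise let \<open>j\<close> be the least index with \<open>|\<lambda>\<^sub>j| = 1\<close>:
  for large \<open>m\<close> the \<open>j\<close>-th summand has absolute value \<open>q^j\<close> and all others are
  strictly smaller, so \<open>|\<phi>\<^sub>m| = q^j > 0\<close> eventually.
\<close>

context
  fixes av :: "'a::field \<Rightarrow> real"
  assumes na: "nonarch_abs av"
begin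

lemma nonarch_abs_nonneg: "av x \<ge> 0"
  using na unfolding nonarch_abs_def by blast

lemma nonarch_abs_eq_0_iff: "av x = 0 \<longleftrightarrow> x = 0"
  using na unfolding nonarch_abs_def by blast

lemma nonarch_abs_mult [simp]: "av (x * y) = av x * av y"
  using na unfolding nonarch_abs_def by blast

lemma nonarch_abs_add_le_max: "av (x + y) \<le> max (av x) (av y)"
  using na unfolding nonarch_abs_def by blast

lemma nonarch_abs_one [simp]: "av 1 = 1"
proof -
  have "av 1 * av 1 = av 1 * 1" and "av 1 \<noteq> 0"
    using nonarch_abs_mult[of 1 1] nonarch_abs_eq_0_iff[of 1] by simp_all
  then show ?thesis
    by simp
qed

lemma nonarch_abs_power [simp]: "av (x ^ n) = av x ^ n"
  by (induction n) simp_all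

lemma nonarch_abs_minus [simp]: "av (- x) = av x"
proof -
  have "av (- 1) ^ 2 = 1"
    using nonarch_abs_power[of "- 1" 2] by simp
  then have "av (- 1) = 1"
    using nonarch_abs_nonneg[of "- 1"] by (simp add: power2_eq_1_iff)
  then show ?thesis
    using nonarch_abs_mult[of "- 1" x] by simp
qed

lemma nonarch_abs_sum_less:
  assumes "finite S" and "e > 0" and "\<And>i. i \<in> S \<Longrightarrow> av (f i) < e"
  shows "av (sum f S) < e"
  using assms(1,3)
proof (induction S rule: finite_induct)
  case empty
  then show ?case
    using nonarch_abs_eq_0_iff[of 0] \<open>e > 0\<close> by simp
next
  case (insert x F)
  then have "max (av (f x)) (av (sum f F)) < e"
    by simp
  then show ?case
    using le_less_trans[OF nonarch_abs_add_le_max[of "f x" "sum f F"]] insert(1,2) by simp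
qed

lemma nonarch_abs_add_eq_dominant:
  assumes "av a < av b"
  shows "av (b + a) = av b"
proof -
  have "av (b + a) \<le> av b"
    using nonarch_abs_add_le_max[of b a] assms by simp
  moreover have "av b \<le> max (av (b + a)) (av a)"
    using nonarch_abs_add_le_max[of "b + a" "- a"] by simp
  ultimately show ?thesis
    using assms by linarith
qed

lemma nonarch_abs_phantom_term_le_of_nat_power:
  assumes "av x \<le> 1"
  shows "av (of_nat p ^ i * x ^ k) \<le> av (of_nat p) ^ i"
  using mult_left_mono[OF power_le_one[OF nonarch_abs_nonneg assms]]
  by (simp add: nonarch_abs_nonneg)

lemma nonarch_abs_phantom_term_le_power:
  assumes "av (of_nat p) \<le> 1"
  shows "av (of_nat p ^ i * x ^ k) \<le> av x ^ k"
  using mult_right_mono[OF power_le_one[OF nonarch_abs_nonneg assms]]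
  by (simp add: nonarch_abs_nonneg)

end

lemma eventually_powers_less_uniform:
  fixes a :: "'b \<Rightarrow> real"
  assumes "finite I" and "\<And>i. i \<in> I \<Longrightarrow> \<bar>a i\<bar> < 1" and "e > 0"
  shows "\<forall>\<^sub>F n in sequentially. \<forall>i\<in>I. a i ^ n < e"
  using assms by (intro eventually_ball_finite ballI order_tendstoD(2)[OF LIMSEQ_power_zero]) auto

lemma phantom_initial_terms_eventually_small:
  fixes av :: "'a::field \<Rightarrow> real" and lam :: "nat \<Rightarrow> 'a"
  assumes na: "nonarch_abs av" and q: "av (of_nat p) \<le> 1" and p: "p \<ge> 2"
    and lam: "\<And>i. i < N \<Longrightarrow> av (lam i) < 1" and e: "e > 0"
  shows "\<forall>\<^sub>F m in sequentially. \<forall>i<N. av (of_nat p ^ i * lam i ^ p ^ (m - i)) < e"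
proof -
  obtain M where M: "\<And>n i. n \<ge> M \<Longrightarrow> i < N \<Longrightarrow> av (lam i) ^ n < e"
    using eventually_powers_less_uniform[of "{..<N}" "\<lambda>i. av (lam i)", OF _ _ e]
      lam nonarch_abs_nonneg[OF na] unfolding eventually_sequentially by fastforce
  have "av (of_nat p ^ i * lam i ^ p ^ (m - i)) < e" if "m \<ge> N + M" and i: "i < N" for m i
  proof -
    have "M \<le> p ^ (m - i)"
      using that self_le_ge2_pow[OF p, of "m - i"] by linarith
    have "av (of_nat p ^ i * lam i ^ p ^ (m - i)) \<le> av (lam i) ^ p ^ (m - i)"
      by (rule nonarch_abs_phantom_term_le_power[OF na q])
    also have "\<dots> < e"
      using M[OF _ i] \<open>M \<le> p ^ (m - i)\<close> .
    finally show ?thesis .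
  qed
  then show ?thesis
    unfolding eventually_sequentially by blast
qed

lemma phantom_tendsto_zero:
  fixes av :: "'a::field \<Rightarrow> real" and lam :: "nat \<Rightarrow> 'a"
  assumes na: "nonarch_abs av" and q: "av (of_nat p) < 1" and p: "p \<ge> 2"
    and lam: "\<And>j. av (lam j) < 1"
  shows "(\<lambda>m. av (phantom p lam m)) \<longlonglongrightarrow> 0"
proof (rule order_tendstoI)
  fix e :: real
  assume e: "e > 0"
  obtain N where N: "av (of_nat p) ^ N < e"
    using real_arch_pow_inv[OF e q] by blast
  obtain M where M: "\<And>m i. m \<ge> M \<Longrightarrow> i < N \<Longrightarrow> av (of_nat p ^ i * lam i ^ p ^ (m - i)) < e"
    using phantom_initial_terms_eventually_small[where lam = lam and N = N,
        OF na less_imp_le[OF q] p lam e]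
    unfolding eventually_sequentially by blast
  have "av (phantom p lam m) < e" if m: "m \<ge> M" for m
    unfolding phantom_def
  proof (rule nonarch_abs_sum_less[OF na _ e])
    fix i
    show "av (of_nat p ^ i * lam i ^ p ^ (m - i)) < e"
    proof (cases "i < N")
      case True
      then show ?thesis
        using M[OF m] by blast
    next
      case False
      have "av (of_nat p ^ i * lam i ^ p ^ (m - i)) \<le> av (of_nat p) ^ i"
        using lam[of i] by (intro nonarch_abs_phantom_term_le_of_nat_power[OF na]) simp
      also have "\<dots> \<le> av (of_nat p) ^ N"
        using False q by (intro power_decreasing) (auto simp: nonarch_abs_nonneg[OF na])
      finally show ?thesis
        using N by simp
    qed
  qed simp
  then show "\<forall>\<^sub>F m in sequentially. av (phantom p lam m) < e"
    unfolding eventually_sequentially by blast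
qed (auto intro!: always_eventually less_le_trans[OF _ nonarch_abs_nonneg[OF na]])

lemma phantom_eventually_eq_power:
  fixes av :: "'a::field \<Rightarrow> real" and lam :: "nat \<Rightarrow> 'a"
  assumes na: "nonarch_abs av" and q: "0 < av (of_nat p)" "av (of_nat p) < 1" and p: "p \<ge> 2"
    and lam: "\<And>i. av (lam i) \<le> 1" "\<And>i. i < j \<Longrightarrow> av (lam i) < 1" "av (lam j) = 1"
  shows "\<forall>\<^sub>F m in sequentially. av (phantom p lam m) = av (of_nat p) ^ j"
proof -
  define t where "t = av (of_nat p) ^ j"
  have t: "t > 0"
    unfolding t_def using q by simp
  obtain M where M: "\<And>m i. m \<ge> M \<Longrightarrow> i < j \<Longrightarrow> av (of_nat p ^ i * lam i ^ p ^ (m - i)) < t"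
    using phantom_initial_terms_eventually_small[where lam = lam and N = j,
        OF na less_imp_le[OF q(2)] p lam(2) t]
    unfolding eventually_sequentially by blast
  have "av (phantom p lam m) = t" if m: "m \<ge> j + M" for m
  proof -
    let ?f = "\<lambda>i. of_nat p ^ i * lam i ^ p ^ (m - i) :: 'a"
    have split: "phantom p lam m = ?f j + sum ?f ({..m} - {j})"
      unfolding phantom_def using m by (simp add: sum.remove[of _ j])
    have "av (sum ?f ({..m} - {j})) < t"
    proof (rule nonarch_abs_sum_less[OF na _ t])
      fix i
      assume i: "i \<in> {..m} - {j}"
      show "av (?f i) < t"
      proof (cases "i < j")
        case True
        with m show ?thesis
          using M[of m] by simp
      next
        case False
        with i have "j < i" by auto
        then have "av (of_nat p) ^ i < t"
          unfolding t_def using q by (rule power_strict_decreasing)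
        with nonarch_abs_phantom_term_le_of_nat_power[OF na lam(1)] show ?thesis
          by (rule le_less_trans)
      qed
    qed simp
    moreover have "av (?f j) = t"
      using na lam(3) by (simp add: t_def)
    ultimately show ?thesis
      using split nonarch_abs_add_eq_dominant[OF na] by simp
  qed
  then show ?thesis
    unfolding eventually_sequentially t_def by blast
qed

theorem lemma2p2p4:
  fixes av :: "'a::field_char_0 \<Rightarrow> real" and p :: nat and lam :: "nat \<Rightarrow> 'a"
  assumes "nonarch_abs av" and "abs_complete av" and "residue_char av p"
    and "witt_OK av lam"
  shows "((\<lambda>j. av (phantom p lam j)) \<longlonglongrightarrow> 0) \<longleftrightarrow> (\<forall>j. av (lam j) < 1)"
proof -
  have p: "p \<ge> 2" and q: "av (of_nat p) < 1"
    using assms(3) prime_ge_2_nat unfolding residue_char_def by auto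
  then have q_pos: "0 < av (of_nat p)"
    using nonarch_abs_nonneg[OF assms(1)] nonarch_abs_eq_0_iff[OF assms(1), of "of_nat p"]
    by (simp add: order_less_le)
  have lam_le: "\<And>i. av (lam i) \<le> 1"
    using assms(4) unfolding witt_OK_def by blast
  show ?thesis
  proof
    assume lim: "(\<lambda>j. av (phantom p lam j)) \<longlonglongrightarrow> 0"
    show "\<forall>j. av (lam j) < 1"
    proof (rule ccontr)
      assume "\<not> (\<forall>j. av (lam j) < 1)"
      then have "\<exists>j. \<not> av (lam j) < 1"
        by simp
      then obtain j where "\<not> av (lam j) < 1" and "\<forall>i<j. \<not> \<not> av (lam i) < 1"
        by (auto simp only: exists_least_iff[of "\<lambda>j. \<not> av (lam j) < 1"])
      moreover from this(1) have "av (lam j) = 1"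
        using lam_le[of j] by linarith
      ultimately have "\<forall>\<^sub>F m in sequentially. av (phantom p lam m) = av (of_nat p) ^ j"
        by (intro phantom_eventually_eq_power[OF assms(1) q_pos q p lam_le]) simp_all
      from iffD1[OF tendsto_cong[OF this] lim] q_pos show False
        by (simp add: LIMSEQ_const_iff)
    qed
  next
    assume "\<forall>j. av (lam j) < 1"
    then show "(\<lambda>j. av (phantom p lam j)) \<longlonglongrightarrow> 0"
      using phantom_tendsto_zero[OF assms(1) q p] by blast
  qed
qed

end
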